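(* Let $\Sigma$ be an alphabet with $|\Sigma|\ge3$, $k\ge2$, and $f\colon(\Sigma^* )^k\to\Sigma^*$ RCP. Assume: ( * ) for every $i\in\{1,\ldots,k\}$ and every $u\in\Sigma^*$, the $(k-1)$-ary function $g_{i,u}(x_1,\ldots,x_{i-1},x_{i+1},\ldots,x_k)=f(x_1,\ldots,x_{i-1},u,x_{i+1},\ldots,x_k)$ satisfies exactly one of the conditions ($C_1$), ($C_2$), ($C_3$) below (as a $(k-1)$-ary function); ( ** ) there exist $y\in\Sigma^*\setminus\{\varepsilon\}$ and an index $i\in\{2,\ldots,k\}$ such that $f(y,x_2,\ldots,x_k)\in x_i\Sigma^*$ for all $(x_2,\ldots,x_k)\in(\Sigma^* )^{k-1}$. Then, for this index $i$, $f(z_1,z_2,\ldots,z_k)\in z_i\Sigma^*$ for all $(z_1,\ldots,z_k)\in(\Sigma^* )^k$.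
   Context: $\Sigma^*$ is the free monoid over $\Sigma$ (finite words, concatenation, empty word $\varepsilon$). For a word $w$, $w\Sigma^*$ denotes the set of words having $w$ as a prefix. A function $f\colon(\Sigma^* )^k\to\Sigma^*$ is RCP if for every monoid morphism $\varphi\colon\Sigma^*\to\Sigma^*$ and all $u_1,\ldots,u_k,v_1,\ldots,v_k$ with $\varphi(u_i)=\varphi(v_i)$ for all $i$, we have $\varphi(f(u_1,\ldots,u_k))=\varphi(f(v_1,\ldots,v_k))$. For an $m$-ary function $h\colon(\Sigma^* )^m\to\Sigma^*$ the conditions are: ($C_1$) there exists $b\in\Sigma$ with $h(x_1,\ldots,x_m)\in b\Sigma^*$ for all $x_1,\ldots,x_m\in\Sigma^*$; ($C_2$) there exists $j\in\{1,\ldots,m\}$ with $h(x_1,\ldots,x_m)\in x_j\Sigma^*$ for all $x_1,\ldots,x_m\in\Sigma^*$; ($C_3$) $h(x_1,\ldots,x_m)=\varepsilon$ for all $x_1,\ldots,x_m\in\Sigma^*$. *)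

theory Defs
  imports Main
begin

text \<open>Words over the alphabet 'a are lists; an m-ary function on words is a function on
  word lists, of which only the arguments of length m matter.  Argument positions are
  0-based (position i here is position i+1 in the paper).\<close>

definition monoid_morphism :: "('a list \<Rightarrow> 'a list) \<Rightarrow> bool" where
  "monoid_morphism \<phi> \<longleftrightarrow> \<phi> [] = [] \<and> (\<forall>u v. \<phi> (u @ v) = \<phi> u @ \<phi> v)"

definition RCP :: "nat \<Rightarrow> ('a list list \<Rightarrow> 'a list) \<Rightarrow> bool" where
  "RCP k f \<longleftrightarrow> (\<forall>\<phi> us vs. monoid_morphism \<phi> \<and> length us = k \<and> length vs = k \<and>
      (\<forall>i<k. \<phi> (us ! i) = \<phi> (vs ! i)) \<longrightarrow> \<phi> (f us) = \<phi> (f vs))"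

definition has_prefix :: "'a list \<Rightarrow> 'a list \<Rightarrow> bool" where
  "has_prefix w x \<longleftrightarrow> (\<exists>r. w = x @ r)"

definition C1 :: "nat \<Rightarrow> ('a list list \<Rightarrow> 'a list) \<Rightarrow> bool" where
  "C1 m h \<longleftrightarrow> (\<exists>b. \<forall>xs. length xs = m \<longrightarrow> has_prefix (h xs) [b])"

definition C2 :: "nat \<Rightarrow> ('a list list \<Rightarrow> 'a list) \<Rightarrow> bool" where
  "C2 m h \<longleftrightarrow> (\<exists>j<m. \<forall>xs. length xs = m \<longrightarrow> has_prefix (h xs) (xs ! j))"

definition C3 :: "nat \<Rightarrow> ('a list list \<Rightarrow> 'a list) \<Rightarrow> bool" where
  "C3 m h \<longleftrightarrow> (\<forall>xs. length xs = m \<longrightarrow> h xs = [])"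

definition exactly_one_C :: "nat \<Rightarrow> ('a list list \<Rightarrow> 'a list) \<Rightarrow> bool" where
  "exactly_one_C m h \<longleftrightarrow>
     (C1 m h \<and> \<not> C2 m h \<and> \<not> C3 m h) \<or> (\<not> C1 m h \<and> C2 m h \<and> \<not> C3 m h) \<or>
     (\<not> C1 m h \<and> \<not> C2 m h \<and> C3 m h)"

definition fix_arg :: "('a list list \<Rightarrow> 'a list) \<Rightarrow> nat \<Rightarrow> 'a list \<Rightarrow> 'a list list \<Rightarrow> 'a list" where
  "fix_arg f i u xs = f (take i xs @ u # drop i xs)"

end

theory Submission
  imports Defs
begin

text \<open>Call a word u selecting if f(u, x_2, ..., x_k) always begins with x_i.  If
  \<open>\<psi> u = \<psi> y\<close> for a morphism \<open>\<psi>\<close> and a selecting y, then by RCP \<open>\<psi> (f(u, ...))\<close> begins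
  with \<open>\<psi> x_i\<close>; feeding in single letters fixed by \<open>\<psi>\<close> rules out C1, C3, and C2 for every
  index other than i, for the function g_{1,u}, so u is selecting as well (of hypothesis (*)
  only "at least one of C1, C2, C3 holds for g_{1,u}" is needed).  Substituting a
  nonempty word for one letter links every nonempty word to every other, and erasing a letter
  links the empty word to the one-letter words.  A third letter is what keeps two distinct
  test letters fixed under each of these substitutions.\<close>

definition subst_letter :: "'a \<Rightarrow> 'a list \<Rightarrow> 'a list \<Rightarrow> 'a list" where
  "subst_letter x r w = concat (map (\<lambda>l. if l = x then r else [l]) w)"

lemma monoid_morphism_subst_letter: "monoid_morphism (subst_letter x r)"
  by (simp add: monoid_morphism_def subst_letter_def)

lemma monoid_morphism_Cons:
  assumes "monoid_morphism \<psi>"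
  shows "\<psi> (a # w) = \<psi> [a] @ \<psi> w"
proof -
  have "\<psi> ([a] @ w) = \<psi> [a] @ \<psi> w"
    using assms unfolding monoid_morphism_def by blast
  then show ?thesis by simp
qed

lemma subst_letter_simps [simp]:
  "subst_letter x r [] = []"
  "subst_letter x r (a # w) = (if a = x then r else [a]) @ subst_letter x r w"
  "subst_letter x r (v @ w) = subst_letter x r v @ subst_letter x r w"
  by (simp_all add: subst_letter_def)

lemma subst_letter_replicate_other:
  "d \<noteq> x \<Longrightarrow> subst_letter x r (replicate n d) = replicate n d"
  by (induction n) simp_all

lemma exists_letter_avoiding:
  assumes "card (UNIV :: 'a::finite set) \<ge> 3"
  shows "\<exists>c :: 'a. c \<noteq> a \<and> c \<noteq> b"
proof -
  have "card {a, b} < card (UNIV :: 'a set)"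
    using assms by (simp add: card_insert_if)
  then have "UNIV - {a, b} \<noteq> {}"
    by (metis Diff_eq_empty_iff card_mono finite not_le)
  then show ?thesis by blast
qed

lemma RCP_Cons_cong:
  assumes "RCP k f" "monoid_morphism \<psi>" "\<psi> u = \<psi> v" "length xs = k - 1" "k \<ge> 1"
  shows "\<psi> (f (u # xs)) = \<psi> (f (v # xs))"
proof -
  have "\<forall>j<k. \<psi> ((u # xs) ! j) = \<psi> ((v # xs) ! j)"
    using assms(3) by (auto simp: nth_Cons split: nat.splits)
  moreover have "length (u # xs) = k" "length (v # xs) = k"
    using assms(4,5) by simp_all
  ultimately show ?thesis
    using assms(1,2) unfolding RCP_def by blast
qed

locale first_arg_selection =
  fixes f :: "'a::finite list list \<Rightarrow> 'a list" and k i :: nat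
  assumes alphabet_card: "card (UNIV :: 'a set) \<ge> 3"
    and rcp: "RCP k f"
    and i_pos: "1 \<le> i" and i_less: "i < k"
    and first_arg_C:
      "\<And>u. C1 (k - 1) (fix_arg f 0 u) \<or> C2 (k - 1) (fix_arg f 0 u) \<or> C3 (k - 1) (fix_arg f 0 u)"
begin

definition selects :: "'a list \<Rightarrow> bool" where
  "selects u \<longleftrightarrow> (\<forall>xs. length xs = k - 1 \<longrightarrow> has_prefix (f (u # xs)) (xs ! (i - 1)))"

lemma selects_if_other_cases_excluded:
  assumes not_C1: "\<And>a. \<not> (\<forall>xs. length xs = k - 1 \<longrightarrow> has_prefix (f (u # xs)) [a])"
    and not_C2: "\<And>j. j < k - 1 \<Longrightarrow> j \<noteq> i - 1 \<Longrightarrow>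
        \<not> (\<forall>xs. length xs = k - 1 \<longrightarrow> has_prefix (f (u # xs)) (xs ! j))"
    and not_C3: "\<not> (\<forall>xs. length xs = k - 1 \<longrightarrow> f (u # xs) = [])"
  shows "selects u"
proof -
  have g: "fix_arg f 0 u xs = f (u # xs)" for xs by (simp add: fix_arg_def)
  obtain j where "j < k - 1" and j: "\<forall>xs. length xs = k - 1 \<longrightarrow> has_prefix (f (u # xs)) (xs ! j)"
    using first_arg_C[of u] not_C1 not_C3 unfolding C1_def C2_def C3_def g by blast
  with not_C2 have "j = i - 1" by blast
  with j show ?thesis unfolding selects_def by blast
qed

definition test_args :: "'a \<Rightarrow> 'a \<Rightarrow> 'a list list" where
  "test_args b c = (replicate (k - 1) [b])[i - 1 := [c]]"

lemma length_test_args [simp]: "length (test_args b c) = k - 1"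
  by (simp add: test_args_def)

lemma nth_test_args: "j < k - 1 \<Longrightarrow> test_args b c ! j = (if j = i - 1 then [c] else [b])"
  by (simp add: test_args_def nth_list_update)

lemma image_of_test_value:
  assumes "selects y" "monoid_morphism \<psi>" "\<psi> u = \<psi> y" "\<psi> [c] = [c]"
  shows "\<exists>r. \<psi> (f (u # test_args b c)) = c # r"
proof -
  have "test_args b c ! (i - 1) = [c]"
    using i_pos i_less by (simp add: nth_test_args)
  then obtain s where "f (y # test_args b c) = c # s"
    using assms(1)[unfolded selects_def, rule_format, OF length_test_args, of b c]
    by (auto simp: has_prefix_def)
  then have "\<psi> (f (y # test_args b c)) = c # \<psi> s"
    using assms(4) monoid_morphism_Cons[OF assms(2), of c s] by simp
  moreover have "\<psi> (f (u # test_args b c)) = \<psi> (f (y # test_args b c))"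
    using RCP_Cons_cong[OF rcp assms(2,3)] i_less by simp
  ultimately show ?thesis by simp
qed

text \<open>To refute C1 with first letter a, the substitution must not erase a.\<close>

lemma selects_if_subst_related:
  assumes related: "\<And>a. \<exists>x r y. selects y \<and> subst_letter x r u = subst_letter x r y \<and>
      (x = a \<longrightarrow> r \<noteq> [])"
  shows "selects u"
proof (rule selects_if_other_cases_excluded)
  obtain x0 r0 y0 where y0: "selects y0" and eq0: "subst_letter x0 r0 u = subst_letter x0 r0 y0"
    using related by blast
  obtain c where c: "c \<noteq> x0" using exists_letter_avoiding[OF alphabet_card] by blast
  obtain b where b: "b \<noteq> x0" "b \<noteq> c" using exists_letter_avoiding[OF alphabet_card] by blast
  obtain t where t: "subst_letter x0 r0 (f (u # test_args b c)) = c # t"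
    using image_of_test_value[OF y0 monoid_morphism_subst_letter eq0, where b=b and c=c] c by auto
  show "\<not> (\<forall>xs. length xs = k - 1 \<longrightarrow> f (u # xs) = [])"
  proof
    assume "\<forall>xs. length xs = k - 1 \<longrightarrow> f (u # xs) = []"
    then have "f (u # test_args b c) = []" by simp
    with t show False by simp
  qed
  show "\<not> (\<forall>xs. length xs = k - 1 \<longrightarrow> has_prefix (f (u # xs)) (xs ! j))"
    if j: "j < k - 1" "j \<noteq> i - 1" for j
  proof
    assume "\<forall>xs. length xs = k - 1 \<longrightarrow> has_prefix (f (u # xs)) (xs ! j)"
    then have "has_prefix (f (u # test_args b c)) (test_args b c ! j)" by simp
    then obtain s where "f (u # test_args b c) = b # s"
      using j by (auto simp: nth_test_args has_prefix_def)
    with t b show False by simp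
  qed
  show "\<not> (\<forall>xs. length xs = k - 1 \<longrightarrow> has_prefix (f (u # xs)) [a])" for a
  proof
    assume a: "\<forall>xs. length xs = k - 1 \<longrightarrow> has_prefix (f (u # xs)) [a]"
    obtain x r y where y: "selects y" and eq: "subst_letter x r u = subst_letter x r y"
      and r: "x = a \<longrightarrow> r \<noteq> []"
      using related by blast
    obtain a' w where a': "subst_letter x r [a] = a' # w"
      using r by (cases "a = x") (auto simp: neq_Nil_conv)
    obtain c where c: "c \<noteq> x" "c \<noteq> a'" using exists_letter_avoiding[OF alphabet_card] by blast
    obtain t where "subst_letter x r (f (u # test_args c c)) = c # t"
      using image_of_test_value[OF y monoid_morphism_subst_letter eq, where b=c and c=c] c by auto
    moreover obtain s where "f (u # test_args c c) = a # s"
      using a[rule_format, OF length_test_args] by (auto simp: has_prefix_def)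
    ultimately show False
      using a' c(2) by (cases "a = x") auto
  qed
qed

lemma selects_subst_iff:
  assumes "r \<noteq> []" "subst_letter x r u = subst_letter x r v"
  shows "selects u \<longleftrightarrow> selects v"
proof -
  have "selects w" if "selects w'" "subst_letter x r w = subst_letter x r w'" for w w'
    using that assms(1)
    by (intro selects_if_subst_related exI[of _ x] exI[of _ r] exI[of _ w']) simp
  with assms(2) show ?thesis by metis
qed

lemma selects_replicate_append_iff:
  "selects (replicate n d @ q) \<longleftrightarrow> selects (replicate (n + length q) d)"
proof (induction q arbitrary: n)
  case Nil
  then show ?case by simp
next
  case (Cons x q)
  have "subst_letter x [d] (replicate n d @ x # q) = subst_letter x [d] (replicate n d @ d # q)"
    by (cases "d = x") (simp_all add: subst_letter_replicate_other)
  then have "selects (replicate n d @ x # q) \<longleftrightarrow> selects (replicate n d @ d # q)"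
    by (rule selects_subst_iff[rotated]) simp
  also have "\<dots> \<longleftrightarrow> selects (replicate (Suc n) d @ q)"
    by (simp add: replicate_app_Cons_same)
  finally show ?case using Cons.IH[of "Suc n"] by simp
qed

lemma selects_nonempty_iff_singleton:
  assumes "w \<noteq> []"
  shows "selects w \<longleftrightarrow> selects [x]"
proof -
  obtain d where d: "d \<noteq> x" using exists_letter_avoiding[OF alphabet_card] by blast
  have "selects w \<longleftrightarrow> selects (replicate (length w) d)"
    using selects_replicate_append_iff[of 0 d w] by simp
  also have "\<dots> \<longleftrightarrow> selects [x]"
    using selects_subst_iff[of "replicate (length w) d" x] assms d
    by (simp add: subst_letter_replicate_other)
  finally show ?thesis .
qed

lemma selects_Nil_if_singletons:
  assumes "\<And>x. selects [x]"
  shows "selects []"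
proof (rule selects_if_subst_related)
  fix a :: 'a
  obtain x where "x \<noteq> a" using exists_letter_avoiding[OF alphabet_card] by blast
  then show "\<exists>x r y. selects y \<and> subst_letter x r [] = subst_letter x r y \<and> (x = a \<longrightarrow> r \<noteq> [])"
    using assms by (intro exI[of _ x] exI[of _ "[]"] exI[of _ "[x]"]) simp
qed

lemma selects_all:
  assumes "selects y" "y \<noteq> []"
  shows "selects u"
proof -
  have nonempty: "selects w" if "w \<noteq> []" for w
    using assms selects_nonempty_iff_singleton[OF that, of "hd y"]
      selects_nonempty_iff_singleton[OF assms(2), of "hd y"] by simp
  then have "selects []"
    by (intro selects_Nil_if_singletons) simp
  with nonempty show ?thesis
    by (cases "u = []") simp_all
qed

end

theorem mainTheorem17:
  fixes f :: "('a::finite) list list \<Rightarrow> 'a list" and k :: nat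
  assumes "card (UNIV :: 'a set) \<ge> 3"
    and "k \<ge> 2"
    and "RCP k f"
    and "\<forall>i<k. \<forall>u. exactly_one_C (k - 1) (fix_arg f i u)"
    and "y \<noteq> []" and "1 \<le> i" and "i < k"
    and "\<forall>xs. length xs = k - 1 \<longrightarrow> has_prefix (f (y # xs)) (xs ! (i - 1))"
  shows "\<forall>zs. length zs = k \<longrightarrow> has_prefix (f zs) (zs ! i)"
proof -
  have "exactly_one_C (k - 1) (fix_arg f 0 u)" for u
    using assms(2,4) by simp
  then have first_arg_C:
    "C1 (k - 1) (fix_arg f 0 u) \<or> C2 (k - 1) (fix_arg f 0 u) \<or> C3 (k - 1) (fix_arg f 0 u)" for u
    unfolding exactly_one_C_def by blast
  interpret first_arg_selection f k i
    using assms(1,3,6,7) first_arg_C by unfold_locales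
  have "selects y"
    unfolding selects_def by (fact assms(8))
  then have "selects u" for u
    using assms(5) by (rule selects_all)
  then have prefix: "has_prefix (f (z # xs)) ((z # xs) ! i)" if "length xs = k - 1" for z xs
    using that assms(6) by (simp add: selects_def nth_Cons')
  show ?thesis
  proof (intro allI impI)
    fix zs :: "'a list list"
    assume "length zs = k"
    with assms(2) obtain z xs where "zs = z # xs" "length xs = k - 1"
      by (cases zs) auto
    with prefix show "has_prefix (f zs) (zs ! i)" by simp
  qed
qed

end
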